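(* In the generic model, let $\sigma:=-\partial_0\circ\mathcal P\colon H_R\to\mathbb R$ (the coefficient of $x$ in $\mathcal P$, negated). Then for every $w\in H_R$, $$\sigma\big(B_+(w)\big)=\sum_{n\ge0}c_{n-1}\,\sigma^{\star n}(w),$$ where $\sigma^{\star0}=\varepsilon$ and the sum is finite since $\sigma^{\star n}$ vanishes on forests with fewer than $n$ nodes.
   Context: Generic model: $f\colon[0,\infty)\to\mathbb R$ continuous with $f(\zeta)-c/\zeta=O(\zeta^{-1-\epsilon})$ at infinity; Mellin transform $F(z)=\int_0^\infty f(\zeta)\zeta^{-z}d\zeta=\sum_{n\ge-1}c_nz^n$ near $0$. $H_R$: Connes–Kreimer Hopf algebra of rooted trees ($B_+$ grafts a forest onto a new root; $\Delta\circ B_+=B_+\otimes\mathbb 1+(\mathrm{id}\otimes B_+)\circ\Delta$; counit $\varepsilon$; antipode $S$). $\phi_s(w)=s^{-z|w|}\prod_vF(z|w_v|)$ multiplicative, $\phi_{R,s}=\phi_\mu^{\star-1}\star\phi_s$, and $\mathcal P(w)\in\mathbb R[x]$ with $\lim_{z\to0}\phi_{R,s}(w)=\mathcal P(w)(\ln\frac s\mu)$. $\partial_0=\mathrm{ev}_0\circ\frac d{dx}$; convolution of functionals $\alpha\star\beta=m\circ(\alpha\otimes\beta)\circ\Delta$. *)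

theory Defs
  imports "HOL-Analysis.Analysis" "HOL-Library.Multiset" "HOL-Library.Poly_Mapping"
          "HOL-Library.Landau_Symbols" "HOL-Computational_Algebra.Polynomial"
begin

text \<open>A forest is a multiset of trees (the empty forest is the
  unit 1 of H_R).\<close>

datatype tree = Node "tree multiset"

type_synonym forest = "tree multiset"

text \<open>H_R = free commutative real algebra on trees = real vector space with basis the forests.\<close>
type_synonym HR = "forest \<Rightarrow>\<^sub>0 real"

definition Bplus_forest :: "forest \<Rightarrow> forest" where
  "Bplus_forest g = {# Node g #}"

definition Bplus :: "HR \<Rightarrow> HR" where
  "Bplus w = (\<Sum>g\<in>Poly_Mapping.keys w. Poly_Mapping.single (Bplus_forest g) (Poly_Mapping.lookup w g))"

definition linext :: "(forest \<Rightarrow> real) \<Rightarrow> HR \<Rightarrow> real" where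
  "linext \<alpha> w = (\<Sum>g\<in>Poly_Mapping.keys w. Poly_Mapping.lookup w g * \<alpha> g)"

text \<open>Elements of H_R \<otimes> H_R arising from the coproduct are represented as multisets of
  pairs of forests (each pair w' \<otimes> w'' with coefficient 1, counted with multiplicity).\<close>
definition tmul :: "(forest \<times> forest) multiset \<Rightarrow> (forest \<times> forest) multiset \<Rightarrow> (forest \<times> forest) multiset" where
  "tmul A B = \<Sum>\<^sub># (image_mset (\<lambda>(a1, b1). image_mset (\<lambda>(a2, b2). (a1 + a2, b1 + b2)) B) A)"

definition tone :: "(forest \<times> forest) multiset" where
  "tone = {# ({#}, {#}) #}"

text \<open>Coproduct, determined by multiplicativity and
  Delta \<circ> B_+ = B_+ \<otimes> 1 + (id \<otimes> B_+) \<circ> Delta, with Delta(1) = 1 \<otimes> 1.\<close>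
primrec cop_tree :: "tree \<Rightarrow> (forest \<times> forest) multiset" where
  "cop_tree (Node ts) =
     {# ({# Node ts #}, {#}) #}
     + image_mset (\<lambda>(a, b). (a, Bplus_forest b)) (fold_mset tmul tone (image_mset cop_tree ts))"

definition cop :: "forest \<Rightarrow> (forest \<times> forest) multiset" where
  "cop g = fold_mset tmul tone (image_mset cop_tree g)"

definition counit :: "forest \<Rightarrow> real" where
  "counit g = (if g = {#} then 1 else 0)"

definition conv :: "(forest \<Rightarrow> real) \<Rightarrow> (forest \<Rightarrow> real) \<Rightarrow> forest \<Rightarrow> real" where
  "conv \<alpha> \<beta> g = (\<Sum>\<^sub># (image_mset (\<lambda>(a, b). \<alpha> a * \<beta> b) (cop g)))"

primrec convpow :: "(forest \<Rightarrow> real) \<Rightarrow> nat \<Rightarrow> forest \<Rightarrow> real" where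
  "convpow \<alpha> 0 = counit"
| "convpow \<alpha> (Suc n) = conv \<alpha> (convpow \<alpha> n)"

definition conv_inv :: "(forest \<Rightarrow> real) \<Rightarrow> forest \<Rightarrow> real" where
  "conv_inv \<phi> = (THE \<psi>. \<forall>g. conv \<psi> \<phi> g = counit g)"

primrec tnodes :: "tree \<Rightarrow> nat" where
  "tnodes (Node ts) = 1 + \<Sum>\<^sub># (image_mset tnodes ts)"

definition fnodes :: "forest \<Rightarrow> nat" where
  "fnodes g = \<Sum>\<^sub># (image_mset tnodes g)"

definition mellin :: "(real \<Rightarrow> real) \<Rightarrow> real \<Rightarrow> real" where
  "mellin f z = integral {0<..} (\<lambda>\<zeta>. f \<zeta> * \<zeta> powr (- z))"

primrec treefac :: "(real \<Rightarrow> real) \<Rightarrow> real \<Rightarrow> tree \<Rightarrow> real" where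
  "treefac F z (Node ts) = F (z * real (tnodes (Node ts))) * \<Prod>\<^sub># (image_mset (treefac F z) ts)"

definition phi :: "(real \<Rightarrow> real) \<Rightarrow> real \<Rightarrow> real \<Rightarrow> forest \<Rightarrow> real" where
  "phi F s z g = s powr (- z * real (fnodes g)) * \<Prod>\<^sub># (image_mset (treefac F z) g)"

definition phiR :: "(real \<Rightarrow> real) \<Rightarrow> real \<Rightarrow> real \<Rightarrow> real \<Rightarrow> forest \<Rightarrow> real" where
  "phiR F \<mu> s z g = conv (conv_inv (phi F \<mu> z)) (phi F s z) g"

definition Ppoly :: "(real \<Rightarrow> real) \<Rightarrow> real \<Rightarrow> forest \<Rightarrow> real poly" where
  "Ppoly F \<mu> g = (THE p. \<forall>s>0. ((\<lambda>z. phiR F \<mu> s z g) \<longlongrightarrow> poly p (ln (s / \<mu>))) (at_right 0))"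

definition sigma :: "(real \<Rightarrow> real) \<Rightarrow> real \<Rightarrow> forest \<Rightarrow> real" where
  "sigma F \<mu> g = - poly (pderiv (Ppoly F \<mu> g)) 0"

end

theory Submission
  imports Defs
begin

(*
  Let Phi_z be the scale-free Feynman rules (the product over the nodes v of
  F(z |w_v|)) and Psi_z their convolution inverse. Then phi_{R,s} is Psi_z * Phi_z with the
  extra weight exp(-z |w''| ln(s/mu)) on the right factor, so expanding the exponential shows
  that the limit polynomial is P(w)(x) = sum_m (-x)^m / m! tau^{*m}(w), where
  tau(w) = lim_{z -> 0+} z M_1(w) and M_m = Psi_z * Y^m Phi_z are the moments (Y = grading by
  the number of nodes). In particular sigma = tau. On a tree, z M_1(B_+ w) is a
  (Psi_z * Phi_z)-weighted sum of G(z(|w''| + 1)) with G(x) = x F(x) = sum_n c_{n-1} x^n,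
  and the same expansion argument gives tau(B_+ w) = sum_n c_{n-1} tau^{*n}(w).
*)

section \<open>The coproduct on forests\<close>

lemma sum_mset_cong: "(\<And>x. x \<in># M \<Longrightarrow> f x = g x) \<Longrightarrow> (\<Sum>x\<in>#M. f x) = (\<Sum>x\<in>#M. g x)"
  by (metis image_mset_cong)

text \<open>Componentwise sum of pairs of forests: the product of two basis tensors in
  H_R \<otimes> H_R.\<close>
definition padd :: "forest \<times> forest \<Rightarrow> forest \<times> forest \<Rightarrow> forest \<times> forest" where
  "padd p q = (fst p + fst q, snd p + snd q)"

lemma sum_tmul: "(\<Sum>x\<in>#tmul A B. h x) = (\<Sum>p\<in>#A. \<Sum>q\<in>#B. h (padd p q))"
proof -
  have sum_Union: "sum_mset (image_mset h (\<Sum>\<^sub># MM)) = (\<Sum>M\<in>#MM. sum_mset (image_mset h M))"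
    for MM :: "(forest \<times> forest) multiset multiset"
    by (induction MM) auto
  show ?thesis
    unfolding tmul_def sum_Union
    by (simp add: multiset.map_comp comp_def padd_def case_prod_beta')
qed

text \<open>Multisets are determined by their sums of natural-valued functions; this turns
  identities of tensors into identities of sums.\<close>
lemma mset_eq_by_sums:
  assumes "\<And>h::('a \<Rightarrow> nat). (\<Sum>x\<in>#M. h x) = (\<Sum>x\<in>#N. h x)"
  shows "M = N"
proof (rule multiset_eqI)
  fix e
  show "count M e = count N e"
    using assms[of "\<lambda>x. if x = e then 1 else 0"] by (simp add: sum_mset_delta)
qed

text \<open>The tensor product makes multisets of pairs a commutative monoid with unit
  1 \<otimes> 1, so the fold defining the coproduct of a forest is well behaved.\<close>
lemma tmul_comm: "tmul A B = tmul B A"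
  by (rule mset_eq_by_sums) (simp add: sum_tmul, subst sum_mset.swap, simp add: padd_def add.commute)

lemma tmul_assoc: "tmul (tmul A B) C = tmul A (tmul B C)"
  by (rule mset_eq_by_sums) (simp add: sum_tmul padd_def add.assoc)

lemma tmul_tone: "tmul A tone = A"
  by (rule mset_eq_by_sums) (simp add: sum_tmul tone_def padd_def)

interpretation tmul: comp_fun_commute tmul
proof
  fix x y
  show "tmul y \<circ> tmul x = tmul x \<circ> tmul y"
    by (simp add: fun_eq_iff tmul_assoc[symmetric] tmul_comm[of y x])
qed

lemma fold_tmul: "fold_mset tmul X M = tmul X (fold_mset tmul tone M)"
  by (induction M) (simp_all add: tmul_tone tmul.fun_left_comm)

lemma cop_empty: "cop {#} = tone"
  by (simp add: cop_def)

lemma cop_add: "cop (g1 + g2) = tmul (cop g1) (cop g2)"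
  unfolding cop_def image_mset_union tmul.fold_mset_union by (rule fold_tmul)

lemma sum_cop_add: "(\<Sum>x\<in>#cop (g1 + g2). h x) = (\<Sum>p\<in>#cop g1. \<Sum>q\<in>#cop g2. h (padd p q))"
  by (simp add: cop_add sum_tmul)

lemma cop_Bplus:
  "cop (Bplus_forest g) = add_mset (Bplus_forest g, {#}) (image_mset (\<lambda>p. (fst p, Bplus_forest (snd p))) (cop g))"
proof -
  have "cop (Bplus_forest g) = cop_tree (Node g)"
    unfolding cop_def Bplus_forest_def by (simp add: tmul_tone del: cop_tree.simps)
  then show ?thesis
    by (simp only: cop_tree.simps cop_def[symmetric]) (simp add: Bplus_forest_def case_prod_beta')
qed

lemma forest_induct [case_names empty add Bplus]:
  assumes empty: "P {#}" and add: "\<And>g1 g2. P g1 \<Longrightarrow> P g2 \<Longrightarrow> P (g1 + g2)"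
    and Bplus: "\<And>g. P g \<Longrightarrow> P (Bplus_forest g)"
  shows "P g"
proof -
  have forest: "P M" if "\<And>x. x \<in># M \<Longrightarrow> P {#x#}" for M
    using that by (induction M) (auto intro: empty add[of _ "{#_#}", simplified])
  have "P {#t#}" for t
  proof (induction t)
    case (Node ts)
    then show ?case using Bplus[OF forest[of ts]] by (simp add: Bplus_forest_def)
  qed
  then show ?thesis by (rule forest)
qed

lemma forest_cases:
  obtains "g = {#}" | h where "g = Bplus_forest h" | g1 g2 where "g = g1 + g2" "g1 \<noteq> {#}" "g2 \<noteq> {#}"
proof (cases g)
  case (add t g')
  show ?thesis
  proof (cases "g' = {#}")
    case True
    obtain h where "t = Node h" by (cases t)
    then show ?thesis using add True that(2)[of h] by (simp add: Bplus_forest_def)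
  next
    case False
    then show ?thesis using add that(3)[of "{#t#}" g'] by simp
  qed
qed (use that in simp)

lemma fnodes_add [simp]: "fnodes (a + b) = fnodes a + fnodes b"
  by (simp add: fnodes_def)

lemma fnodes_empty [simp]: "fnodes {#} = 0"
  by (simp add: fnodes_def)

lemma fnodes_Bplus [simp]: "fnodes (Bplus_forest g) = Suc (fnodes g)"
  by (simp add: Bplus_forest_def fnodes_def)

lemma fnodes_eq_0: "fnodes g = 0 \<longleftrightarrow> g = {#}"
proof (induction g)
  case (add t g)
  then show ?case by (cases t) (simp add: fnodes_def)
qed simp

lemma Bplus_forest_nonempty [simp]: "Bplus_forest g \<noteq> {#}"
  by (simp add: Bplus_forest_def)

lemma Bplus_forest_inj: "Bplus_forest a = Bplus_forest b \<longleftrightarrow> a = b"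
  by (simp add: Bplus_forest_def)

lemma cop_nodes: "p \<in># cop g \<Longrightarrow> fnodes (fst p) + fnodes (snd p) = fnodes g"
proof (induction g arbitrary: p rule: forest_induct)
  case empty then show ?case by (simp add: cop_empty tone_def)
next
  case (add g1 g2)
  then obtain p1 p2 where "p1 \<in># cop g1" "p2 \<in># cop g2" "p = padd p1 p2"
    by (auto simp: cop_add tmul_def padd_def)
  with add.IH show ?case by (fastforce simp: padd_def)
next
  case (Bplus g)
  then show ?case by (auto simp: cop_Bplus)
qed

lemma cop_fst_nonempty: "p \<in># cop g \<Longrightarrow> fst p \<noteq> {#} \<Longrightarrow> fnodes (snd p) < fnodes g"
  using cop_nodes[of p g] fnodes_eq_0[of "fst p"] by linarith

lemma cop_snd_nonempty: "p \<in># cop g \<Longrightarrow> snd p \<noteq> {#} \<Longrightarrow> fnodes (fst p) < fnodes g"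
  using cop_nodes[of p g] fnodes_eq_0[of "snd p"] by linarith

text \<open>Counit laws, (\<epsilon> \<otimes> id) \<circ> \<Delta> = id = (id \<otimes> \<epsilon>) \<circ> \<Delta>, phrased for an arbitrary
  linear functional h applied to the surviving factor.\<close>
lemma counit_right: "(\<Sum>p\<in>#cop g. if snd p = {#} then h (fst p) else (0::real)) = h g"
proof (induction g arbitrary: h rule: forest_induct)
  case empty then show ?case by (simp add: cop_empty tone_def)
next
  case (add g1 g2)
  have "(\<Sum>p\<in>#cop (g1 + g2). if snd p = {#} then h (fst p) else 0)
      = (\<Sum>p1\<in>#cop g1. if snd p1 = {#} then (\<Sum>p2\<in>#cop g2. if snd p2 = {#} then h (fst p1 + fst p2) else 0) else 0)"
    unfolding sum_cop_add padd_def by (auto intro!: sum_mset_cong)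
  also have "\<dots> = (\<Sum>p1\<in>#cop g1. if snd p1 = {#} then h (fst p1 + g2) else 0)"
    using add.IH(2)[of "\<lambda>b. h (_ + b)"] by (intro sum_mset_cong) simp
  finally show ?case using add.IH(1)[of "\<lambda>a. h (a + g2)"] by simp
next
  case (Bplus g)
  then show ?case by (simp add: cop_Bplus multiset.map_comp comp_def)
qed

lemma counit_left: "(\<Sum>p\<in>#cop g. if fst p = {#} then h (snd p) else (0::real)) = h g"
proof (induction g arbitrary: h rule: forest_induct)
  case empty then show ?case by (simp add: cop_empty tone_def)
next
  case (add g1 g2)
  have "(\<Sum>p\<in>#cop (g1 + g2). if fst p = {#} then h (snd p) else 0)
      = (\<Sum>p1\<in>#cop g1. if fst p1 = {#} then (\<Sum>p2\<in>#cop g2. if fst p2 = {#} then h (snd p1 + snd p2) else 0) else 0)"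
    unfolding sum_cop_add padd_def by (auto intro!: sum_mset_cong)
  also have "\<dots> = (\<Sum>p1\<in>#cop g1. if fst p1 = {#} then h (snd p1 + g2) else 0)"
    using add.IH(2)[of "\<lambda>b. h (_ + b)"] by (intro sum_mset_cong) simp
  finally show ?case using add.IH(1)[of "\<lambda>a. h (a + g2)"] by simp
next
  case (Bplus g)
  then show ?case
    using Bplus.IH[of "h \<circ> Bplus_forest"] by (simp add: cop_Bplus multiset.map_comp comp_def cong: if_cong)
qed

text \<open>Coassociativity (\<Delta> \<otimes> id) \<circ> \<Delta> = (id \<otimes> \<Delta>) \<circ> \<Delta>, tested against an arbitrary
  function of the three tensor factors.\<close>
lemma coassoc:
  fixes h :: "forest \<Rightarrow> forest \<Rightarrow> forest \<Rightarrow> real"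
  shows "(\<Sum>p\<in>#cop g. \<Sum>q\<in>#cop (fst p). h (fst q) (snd q) (snd p))
       = (\<Sum>p\<in>#cop g. \<Sum>q\<in>#cop (snd p). h (fst p) (fst q) (snd q))"
proof (induction g arbitrary: h rule: forest_induct)
  case empty then show ?case by (simp add: cop_empty tone_def)
next
  case (add g1 g2)
  define K where "K x y z = (\<Sum>p\<in>#cop g2. \<Sum>q\<in>#cop (snd p). h (x + fst p) (y + fst q) (z + snd q))" for x y z
  have inner: "(\<Sum>p\<in>#cop g2. \<Sum>q\<in>#cop (fst p). h (x + fst q) (y + snd q) (z + snd p)) = K x y z" for x y z
    unfolding K_def by (rule add.IH(2))
  have "(\<Sum>p\<in>#cop (g1 + g2). \<Sum>q\<in>#cop (fst p). h (fst q) (snd q) (snd p))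
     = (\<Sum>p1\<in>#cop g1. \<Sum>q1\<in>#cop (fst p1). \<Sum>p2\<in>#cop g2. \<Sum>q2\<in>#cop (fst p2).
           h (fst q1 + fst q2) (snd q1 + snd q2) (snd p1 + snd p2))"
    by (simp add: sum_cop_add padd_def sum_mset.swap[of _ "cop g2"])
  also have "\<dots> = (\<Sum>p1\<in>#cop g1. \<Sum>q1\<in>#cop (fst p1). K (fst q1) (snd q1) (snd p1))"
    by (simp add: inner)
  also have "\<dots> = (\<Sum>p1\<in>#cop g1. \<Sum>q1\<in>#cop (snd p1). K (fst p1) (fst q1) (snd q1))"
    by (rule add.IH(1))
  also have "\<dots> = (\<Sum>p\<in>#cop (g1 + g2). \<Sum>q\<in>#cop (snd p). h (fst p) (fst q) (snd q))"
    unfolding K_def by (simp add: sum_cop_add padd_def sum_mset.swap[of _ "cop g2"])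
  finally show ?case .
next
  case (Bplus g)
  have "(\<Sum>p\<in>#cop g. \<Sum>q\<in>#cop (fst p). h (fst q) (snd q) (Bplus_forest (snd p)))
     = (\<Sum>p\<in>#cop g. \<Sum>q\<in>#cop (snd p). h (fst p) (fst q) (Bplus_forest (snd q)))"
    by (rule Bplus.IH)
  then show ?case
    by (simp add: cop_Bplus multiset.map_comp comp_def sum_mset.distrib cop_empty tone_def)
qed

section \<open>The convolution monoid\<close>

lemma conv_alt: "conv \<alpha> \<beta> g = (\<Sum>p\<in>#cop g. \<alpha> (fst p) * \<beta> (snd p))"
  by (simp add: conv_def case_prod_beta')

lemma conv_counit_left [simp]: "conv counit \<beta> g = \<beta> g"
proof -
  have "counit (fst p) * \<beta> (snd p) = (if fst p = {#} then \<beta> (snd p) else 0)" for p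
    by (simp add: counit_def)
  then show ?thesis by (simp add: conv_alt counit_left)
qed

lemma conv_counit_right [simp]: "conv \<alpha> counit g = \<alpha> g"
proof -
  have "\<alpha> (fst p) * counit (snd p) = (if snd p = {#} then \<alpha> (fst p) else 0)" for p
    by (simp add: counit_def)
  then show ?thesis by (simp add: conv_alt counit_right)
qed

text \<open>Convolution is associative (dual to coassociativity).\<close>
lemma conv_assoc: "conv (conv \<alpha> \<beta>) \<gamma> g = conv \<alpha> (conv \<beta> \<gamma>) g"
  using coassoc[where g=g and h="\<lambda>x y z. \<alpha> x * \<beta> y * \<gamma> z"]
  by (simp add: conv_alt sum_mset_distrib_left sum_mset_distrib_right mult.assoc)

lemma conv_add_right: "conv \<alpha> (\<lambda>x. \<beta> x + \<gamma> x) g = conv \<alpha> \<beta> g + conv \<alpha> \<gamma> g"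
  unfolding conv_alt by (simp add: distrib_left sum_mset.distrib)

text \<open>The terms of \<Delta>(g) with trivial right factor contribute X(g) \<phi>(1) (counit law); all
  other terms only evaluate X on forests with fewer nodes than g.\<close>
lemma conv_split:
  "conv X \<phi> g = X g * \<phi> {#} + (\<Sum>p\<in>#cop g. if snd p = {#} then 0 else X (fst p) * \<phi> (snd p))"
proof -
  have "conv X \<phi> g = (\<Sum>p\<in>#cop g. (if snd p = {#} then X (fst p) * \<phi> {#} else 0)
            + (if snd p = {#} then 0 else X (fst p) * \<phi> (snd p)))"
    unfolding conv_alt by (intro sum_mset_cong) auto
  then show ?thesis
    by (simp only: sum_mset.distrib counit_right[where g=g and h="\<lambda>a. X a * \<phi> {#}"])
qed

lemma conv_cong_left:
  assumes "\<And>h. fnodes h \<le> fnodes g \<Longrightarrow> X h = Y h"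
  shows "conv X \<phi> g = conv Y \<phi> g"
  unfolding conv_alt using cop_nodes assms by (intro sum_mset_cong) (metis le_add1)

lemma conv_cancel_right:
  assumes "\<phi> {#} = 1" and "\<And>h. fnodes h < fnodes g \<Longrightarrow> X h = Y h"
    and "conv X \<phi> g = conv Y \<phi> g"
  shows "X g = Y g"
proof -
  have "(\<Sum>p\<in>#cop g. if snd p = {#} then 0 else X (fst p) * \<phi> (snd p))
      = (\<Sum>p\<in>#cop g. if snd p = {#} then 0 else Y (fst p) * \<phi> (snd p))"
    using assms(2) by (intro sum_mset_cong) (auto dest: cop_snd_nonempty)
  then show ?thesis using assms(3) unfolding conv_split assms(1) by simp
qed

lemma conv_right_unique:
  assumes "\<phi> {#} = 1" and "\<And>g. conv X \<phi> g = conv Y \<phi> g"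
  shows "X = Y"
proof
  fix g show "X g = Y g"
  proof (induction "fnodes g" arbitrary: g rule: less_induct)
    case less
    then show ?case using conv_cancel_right[where \<phi>=\<phi>, OF assms(1)] assms(2) by blast
  qed
qed

text \<open>A left convolution inverse of \<phi> with \<phi>(1) = 1, built by recursion on the number of
  nodes from the identity of conv_split.\<close>
function left_inverse :: "(forest \<Rightarrow> real) \<Rightarrow> forest \<Rightarrow> real" where
  "left_inverse \<phi> g =
     counit g - (\<Sum>p\<in>#cop g. if snd p = {#} then 0 else left_inverse \<phi> (fst p) * \<phi> (snd p))"
  by pat_completeness auto
termination
  by (relation "Wellfounded.measure (\<lambda>(\<phi>, g). fnodes g)") (auto dest: cop_snd_nonempty)

lemma conv_left_inverse: "\<phi> {#} = 1 \<Longrightarrow> conv (left_inverse \<phi>) \<phi> g = counit g"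
  unfolding conv_split by (subst left_inverse.simps[of \<phi> g]) simp

lemma conv_inv_eq: "\<phi> {#} = 1 \<Longrightarrow> (\<And>g. conv \<psi> \<phi> g = counit g) \<Longrightarrow> conv_inv \<phi> = \<psi>"
  unfolding conv_inv_def by (rule the_equality) (auto intro: conv_right_unique)

lemma conv_inv_left: "\<phi> {#} = 1 \<Longrightarrow> conv (conv_inv \<phi>) \<phi> g = counit g"
  using conv_inv_eq[of \<phi> "left_inverse \<phi>"] conv_left_inverse[of \<phi>] by simp

lemma conv_inv_right:
  assumes "\<phi> {#} = 1"
  shows "conv \<phi> (conv_inv \<phi>) g = counit g"
proof -
  have "conv (conv_inv \<phi>) \<phi> = counit"
    by (rule ext) (rule conv_inv_left[where \<phi>=\<phi>, OF assms])
  then have "conv (conv \<phi> (conv_inv \<phi>)) \<phi> h = conv counit \<phi> h" for h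
    by (simp add: conv_assoc)
  then have "conv \<phi> (conv_inv \<phi>) = counit"
    by (rule conv_right_unique[where \<phi>=\<phi>, OF assms])
  then show ?thesis by simp
qed

text \<open>Characters: the convolution of two multiplicative functionals is multiplicative
  (\<Delta> is an algebra morphism) ...\<close>
lemma conv_mult:
  assumes "\<And>a b. \<alpha> (a + b) = \<alpha> a * \<alpha> b" and "\<And>a b. \<beta> (a + b) = \<beta> a * \<beta> b"
  shows "conv \<alpha> \<beta> (g1 + g2) = conv \<alpha> \<beta> g1 * conv \<alpha> \<beta> g2"
proof -
  have "conv \<alpha> \<beta> (g1 + g2)
      = (\<Sum>p\<in>#cop g1. \<Sum>q\<in>#cop g2. (\<alpha> (fst p) * \<beta> (snd p)) * (\<alpha> (fst q) * \<beta> (snd q)))"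
    unfolding conv_alt sum_cop_add by (simp add: padd_def assms mult_ac)
  also have "\<dots> = conv \<alpha> \<beta> g1 * conv \<alpha> \<beta> g2"
    unfolding conv_alt sum_mset_distrib_right by (simp add: sum_mset_distrib_left)
  finally show ?thesis .
qed

text \<open>The inverse agrees
  with the multiplicative extension of its values on trees: by induction on the number of
  nodes, using right cancellation on products of two non-trivial forests.\<close>
lemma conv_inv_mult:
  assumes one: "\<phi> {#} = 1" and mult: "\<And>a b. \<phi> (a + b) = \<phi> a * \<phi> b"
  shows "conv_inv \<phi> (a + b) = conv_inv \<phi> a * conv_inv \<phi> b"
proof -
  let ?\<psi> = "conv_inv \<phi>"
  define \<theta> where "\<theta> g = (\<Prod>t\<in>#g. conv_inv \<phi> {#t#})" for g
  have \<theta>_mult: "\<theta> (a + b) = \<theta> a * \<theta> b" for a b by (simp add: \<theta>_def)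
  have "?\<psi> g = \<theta> g" for g
  proof (induction "fnodes g" arbitrary: g rule: less_induct)
    case less
    have \<psi>_empty: "?\<psi> {#} = 1"
      using conv_inv_left[where \<phi>=\<phi>, OF one, of "{#}"] by (simp add: conv_alt cop_empty tone_def counit_def one)
    have below: "conv \<theta> \<phi> h = counit h" if "fnodes h < fnodes g" for h
      using conv_cong_left[of h \<theta> ?\<psi> \<phi>] less that conv_inv_left[where \<phi>=\<phi>, OF one] by simp
    show ?case
    proof (cases g rule: forest_cases)
      case 1 then show ?thesis by (simp add: \<theta>_def \<psi>_empty)
    next
      case (2 h) then show ?thesis by (simp add: \<theta>_def Bplus_forest_def)
    next
      case (3 g1 g2)
      have "fnodes g1 < fnodes g" "fnodes g2 < fnodes g"
        using 3 fnodes_eq_0 by auto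
      then have "conv \<theta> \<phi> g = counit g"
        using 3 conv_mult[of \<theta> \<phi>, OF \<theta>_mult mult] below by (simp add: counit_def)
      then show ?thesis
        using conv_cancel_right[where \<phi>=\<phi> and g=g, OF one] less conv_inv_left[where \<phi>=\<phi>, OF one] by metis
    qed
  qed
  then show ?thesis by (simp add: \<theta>_mult)
qed

definition Yop :: "(forest \<Rightarrow> real) \<Rightarrow> forest \<Rightarrow> real" where
  "Yop \<alpha> g = real (fnodes g) * \<alpha> g"

lemma Yop_conv: "Yop (conv \<alpha> \<beta>) g = conv (Yop \<alpha>) \<beta> g + conv \<alpha> (Yop \<beta>) g"
proof -
  have "real (fnodes g) * (\<alpha> (fst p) * \<beta> (snd p))
      = real (fnodes (fst p)) * \<alpha> (fst p) * \<beta> (snd p) + \<alpha> (fst p) * (real (fnodes (snd p)) * \<beta> (snd p))"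
    if "p \<in># cop g" for p
  proof -
    have "real (fnodes g) = real (fnodes (fst p)) + real (fnodes (snd p))"
      using cop_nodes[OF that] by simp
    then show ?thesis by (simp add: algebra_simps)
  qed
  then show ?thesis
    unfolding Yop_def conv_alt sum_mset_distrib_left sum_mset.distrib[symmetric]
    by (rule sum_mset_cong)
qed

section \<open>The Feynman rules of the generic model as characters\<close>

definition Phi :: "(real \<Rightarrow> real) \<Rightarrow> real \<Rightarrow> forest \<Rightarrow> real" where
  "Phi F z g = \<Prod>\<^sub># (image_mset (treefac F z) g)"

definition Psi :: "(real \<Rightarrow> real) \<Rightarrow> real \<Rightarrow> forest \<Rightarrow> real" where
  "Psi F z = conv_inv (Phi F z)"

lemma Phi_empty [simp]: "Phi F z {#} = 1"
  by (simp add: Phi_def)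

lemma Phi_add: "Phi F z (a + b) = Phi F z a * Phi F z b"
  by (simp add: Phi_def)

lemma Phi_Bplus: "Phi F z (Bplus_forest g) = F (z * real (Suc (fnodes g))) * Phi F z g"
  by (simp add: Phi_def Bplus_forest_def fnodes_def)

lemma phi_Phi: "phi F s z g = s powr (- z * real (fnodes g)) * Phi F z g"
  by (simp add: phi_def Phi_def)

lemma Psi_left: "conv (Psi F z) (Phi F z) g = counit g"
  unfolding Psi_def by (rule conv_inv_left) simp

lemma Psi_right: "conv (Phi F z) (Psi F z) g = counit g"
  unfolding Psi_def by (rule conv_inv_right) simp

lemma Psi_add: "Psi F z (a + b) = Psi F z a * Psi F z b"
  unfolding Psi_def by (rule conv_inv_mult) (simp_all add: Phi_add)

lemma Psi_rec:
  "Psi F z g = counit g - (\<Sum>p\<in>#cop g. if snd p = {#} then 0 else Psi F z (fst p) * Phi F z (snd p))"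
  using Psi_left[of F z g] unfolding conv_split by simp

text \<open>The moments \<Psi>_z \<star> Y^m \<Phi>_z: expanding s^{-z|w|} in powers of z ln s turns the
  renormalized Feynman rules into these functionals.\<close>
definition moment :: "(real \<Rightarrow> real) \<Rightarrow> nat \<Rightarrow> real \<Rightarrow> forest \<Rightarrow> real" where
  "moment F m z = conv (Psi F z) ((Yop ^^ m) (Phi F z))"

lemma Yop_power: "(Yop ^^ m) \<alpha> g = real (fnodes g) ^ m * \<alpha> g"
  by (induction m arbitrary: g) (simp_all add: Yop_def)

lemma moment_alt:
  "moment F m z g = (\<Sum>p\<in>#cop g. Psi F z (fst p) * (real (fnodes (snd p)) ^ m * Phi F z (snd p)))"
  by (simp add: moment_def conv_alt Yop_power)

lemma moment_0: "moment F 0 z g = counit g"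
  by (simp add: moment_def Psi_left)

text \<open>Since Y is a derivation, the moments satisfy
  M_{m+1} = M_1 \<star> M_m + Y M_m.\<close>
lemma moment_Suc:
  "moment F (Suc m) z g = conv (moment F 1 z) (moment F m z) g + real (fnodes g) * moment F m z g"
proof -
  have Phi_Psi: "conv (Phi F z) (Psi F z) = counit" and Psi_Phi: "conv (Psi F z) (Phi F z) = counit"
    by (rule ext, rule Psi_right, rule ext, rule Psi_left)
  have "conv (Phi F z) (moment F m z) = (Yop ^^ m) (Phi F z)"
    by (rule ext) (simp add: moment_def conv_assoc[symmetric] Phi_Psi)
  then have "(Yop ^^ Suc m) (Phi F z) = (\<lambda>x. conv (Yop (Phi F z)) (moment F m z) x
                                       + conv (Phi F z) (Yop (moment F m z)) x)"
    by (metis Yop_conv funpow.simps(2) comp_apply ext)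
  then have "moment F (Suc m) z g = conv (conv (Psi F z) (Yop (Phi F z))) (moment F m z) g
                                  + conv (conv (Psi F z) (Phi F z)) (Yop (moment F m z)) g"
    by (simp add: moment_def conv_add_right conv_assoc)
  then show ?thesis by (simp add: Psi_Phi Yop_def moment_def)
qed

lemma moment_1_add:
  "moment F 1 z (a + b) = moment F 1 z a * counit b + counit a * moment F 1 z b"
proof -
  let ?M = "\<lambda>g. conv (Psi F z) (Phi F z) g"
  have "moment F 1 z (a + b) = (\<Sum>p\<in>#cop a. \<Sum>q\<in>#cop b.
      (Psi F z (fst p) * (real (fnodes (snd p)) * Phi F z (snd p))) * (Psi F z (fst q) * Phi F z (snd q))
    + (Psi F z (fst p) * Phi F z (snd p)) * (Psi F z (fst q) * (real (fnodes (snd q)) * Phi F z (snd q))))"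
    unfolding moment_alt sum_cop_add by (simp add: padd_def Psi_add Phi_add algebra_simps)
  also have "\<dots> = moment F 1 z a * ?M b + ?M a * moment F 1 z b"
    unfolding moment_alt conv_alt sum_mset_distrib_right sum_mset.distrib
    by (simp add: sum_mset_distrib_left)
  finally show ?thesis by (simp add: Psi_left)
qed

text \<open>By the cocycle property, z M_1 on a tree is the (\<Psi>_z \<star> \<Phi>_z)-weighted sum of
  x F(x) at the points x = z (|g''| + 1).\<close>
lemma moment_1_Bplus:
  "z * moment F 1 z (Bplus_forest g) = (\<Sum>p\<in>#cop g. Psi F z (fst p) * Phi F z (snd p)
      * ((z * (real (fnodes (snd p)) + 1)) * F (z * (real (fnodes (snd p)) + 1))))"
  unfolding moment_alt cop_Bplus
  by (simp add: Phi_Bplus sum_mset_distrib_left multiset.map_comp comp_def algebra_simps)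

lemma conv_inv_phi:
  assumes "\<mu> > 0"
  shows "conv_inv (phi F \<mu> z) = (\<lambda>a. \<mu> powr (- z * real (fnodes a)) * Psi F z a)"
proof (rule conv_inv_eq)
  show "phi F \<mu> z {#} = 1" using assms by (simp add: phi_Phi)
  fix g
  have "\<mu> powr (- z * real (fnodes (fst p))) * Psi F z (fst p) * phi F \<mu> z (snd p)
      = \<mu> powr (- z * real (fnodes g)) * (Psi F z (fst p) * Phi F z (snd p))" if "p \<in># cop g" for p
  proof -
    have "real (fnodes g) = real (fnodes (fst p)) + real (fnodes (snd p))"
      using cop_nodes[OF that] by simp
    then show ?thesis by (simp add: phi_Phi algebra_simps powr_add[symmetric])
  qed
  then have "conv (\<lambda>a. \<mu> powr (- z * real (fnodes a)) * Psi F z a) (phi F \<mu> z) g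
      = \<mu> powr (- z * real (fnodes g)) * conv (Psi F z) (Phi F z) g"
    unfolding conv_alt sum_mset_distrib_left by (rule sum_mset_cong)
  then show "conv (\<lambda>a. \<mu> powr (- z * real (fnodes a)) * Psi F z a) (phi F \<mu> z) g = counit g"
    using assms by (simp add: Psi_left counit_def)
qed

lemma phiR_formula:
  assumes "\<mu> > 0" "s > 0"
  shows "phiR F \<mu> s z g = exp (- z * real (fnodes g) * ln \<mu>) *
     (\<Sum>p\<in>#cop g. Psi F z (fst p) * Phi F z (snd p) * exp (- z * real (fnodes (snd p)) * (ln s - ln \<mu>)))"
  unfolding phiR_def conv_inv_phi[OF assms(1)] conv_alt sum_mset_distrib_left
proof (rule sum_mset_cong)
  fix p assume "p \<in># cop g"
  then have "real (fnodes g) = real (fnodes (fst p)) + real (fnodes (snd p))"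
    using cop_nodes[of p g] by simp
  then have "\<mu> powr (- z * real (fnodes (fst p))) * s powr (- z * real (fnodes (snd p)))
      = exp (- z * real (fnodes g) * ln \<mu>) * exp (- z * real (fnodes (snd p)) * (ln s - ln \<mu>))"
    using assms by (simp add: powr_def exp_add[symmetric] algebra_simps)
  then show "\<mu> powr (- z * real (fnodes (fst p))) * Psi F z (fst p) * phi F s z (snd p) =
      exp (- z * real (fnodes g) * ln \<mu>) * (Psi F z (fst p) * Phi F z (snd p)
        * exp (- z * real (fnodes (snd p)) * (ln s - ln \<mu>)))"
    unfolding phi_Phi by (simp add: algebra_simps)
qed

section \<open>Analytic tools\<close>

lemma powser_remainder:
  fixes a :: "nat \<Rightarrow> real"
  assumes sm: "summable (\<lambda>n. a n * x0 ^ n)" and x0: "x0 \<noteq> 0"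
  shows "\<exists>R. isCont R 0 \<and>
    (\<forall>x. \<bar>x\<bar> < \<bar>x0\<bar> \<longrightarrow> (\<lambda>n. a n * x ^ n) sums ((\<Sum>n\<le>K. a n * x ^ n) + x ^ Suc K * R x))"
proof (intro exI conjI allI impI)
  define R where "R x = suminf (\<lambda>n. a (n + Suc K) * x ^ n)" for x
  have tail: "summable (\<lambda>n. a (n + Suc K) * x0 ^ n)"
  proof -
    have "summable (\<lambda>n. inverse (x0 ^ Suc K) * (a (n + Suc K) * x0 ^ (n + Suc K)))"
      using summable_mult[OF summable_ignore_initial_segment[OF sm, of "Suc K"]] .
    then show ?thesis using x0 by (simp add: power_add field_simps)
  qed
  show "isCont R 0"
    unfolding R_def by (rule isCont_powser[OF tail]) (simp add: x0)
  fix x :: real assume x: "\<bar>x\<bar> < \<bar>x0\<bar>"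
  have sx: "summable (\<lambda>n. a n * x ^ n)" and sxs: "summable (\<lambda>n. a (n + Suc K) * x ^ n)"
    using powser_inside[OF sm] powser_inside[OF tail] x by simp_all
  have "suminf (\<lambda>n. a n * x ^ n) = suminf (\<lambda>n. a (n + Suc K) * x ^ (n + Suc K)) + (\<Sum>n<Suc K. a n * x ^ n)"
    by (rule suminf_split_initial_segment[OF sx])
  also have "suminf (\<lambda>n. a (n + Suc K) * x ^ (n + Suc K)) = x ^ Suc K * R x"
    unfolding R_def using suminf_mult[OF sxs, of "x ^ Suc K"] by (simp add: power_add mult_ac)
  finally show "(\<lambda>n. a n * x ^ n) sums ((\<Sum>n\<le>K. a n * x ^ n) + x ^ Suc K * R x)"
    using sx by (simp add: sums_iff lessThan_Suc_atMost)
qed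

lemma exp_remainder:
  "\<exists>E. isCont E 0 \<and> (\<forall>x::real. \<bar>x\<bar> < 1 \<longrightarrow> exp x = (\<Sum>m\<le>K. inverse (fact m) * x ^ m) + x ^ Suc K * E x)"
proof -
  have exp_series: "(\<lambda>n. inverse (fact n) * x ^ n) sums exp x" for x :: real
    using exp_converges[of x] by (simp add: divide_inverse mult.commute)
  have "summable (\<lambda>n. inverse (fact n) * (1::real) ^ n)"
    using exp_series[of 1] by (rule sums_summable)
  from powser_remainder[OF this one_neq_zero, of K] obtain E where E: "isCont E 0" and expansion:
    "\<forall>x::real. \<bar>x\<bar> < \<bar>1\<bar> \<longrightarrow> (\<lambda>n. inverse (fact n) * x ^ n) sums ((\<Sum>n\<le>K. inverse (fact n) * x ^ n) + x ^ Suc K * E x)"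
    by blast
  show ?thesis
  proof (intro exI[of _ E] conjI allI impI)
    fix x :: real assume "\<bar>x\<bar> < 1"
    then have "(\<lambda>n. inverse (fact n) * x ^ n) sums ((\<Sum>m\<le>K. inverse (fact m) * x ^ m) + x ^ Suc K * E x)"
      using expansion by simp
    then show "exp x = (\<Sum>m\<le>K. inverse (fact m) * x ^ m) + x ^ Suc K * E x"
      using sums_unique2[OF exp_series[of x]] by blast
  qed (rule E)
qed

lemma tendsto_sum_mset:
  fixes f :: "'a \<Rightarrow> 'b \<Rightarrow> real"
  shows "(\<And>x. x \<in># M \<Longrightarrow> ((\<lambda>z. f x z) \<longlongrightarrow> l x) F) \<Longrightarrow> ((\<lambda>z. \<Sum>x\<in>#M. f x z) \<longlongrightarrow> (\<Sum>x\<in>#M. l x)) F"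
  by (induction M) (auto intro!: tendsto_add)

lemma sum_mset_sum_swap: "(\<Sum>x\<in>#M. \<Sum>k\<in>A. f x k) = (\<Sum>k\<in>A. \<Sum>x\<in>#M. f x k :: real)"
  by (induction M) (simp_all add: sum.distrib)

definition pole_order_le :: "(real \<Rightarrow> real) \<Rightarrow> nat \<Rightarrow> bool" where
  "pole_order_le h n \<longleftrightarrow> (\<exists>l. ((\<lambda>z. z ^ n * h z) \<longlongrightarrow> l) (at_right 0))"

lemma pole_order_le_const: "pole_order_le (\<lambda>z. c) n"
proof -
  have "((\<lambda>z. z ^ n * c) \<longlongrightarrow> 0 ^ n * c) (at_right (0::real))"
    by (intro tendsto_intros)
  then show ?thesis unfolding pole_order_le_def by blast
qed

lemma pole_order_le_mult:
  assumes "pole_order_le h1 m" "pole_order_le h2 n"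
  shows "pole_order_le (\<lambda>z. h1 z * h2 z) (m + n)"
proof -
  obtain l1 l2 where "((\<lambda>z. z ^ m * h1 z) \<longlongrightarrow> l1) (at_right 0)" "((\<lambda>z. z ^ n * h2 z) \<longlongrightarrow> l2) (at_right 0)"
    using assms unfolding pole_order_le_def by blast
  from tendsto_mult[OF this] show ?thesis
    unfolding pole_order_le_def by (auto simp: power_add mult_ac)
qed

lemma pole_order_le_diff:
  assumes "pole_order_le h1 n" "pole_order_le h2 n"
  shows "pole_order_le (\<lambda>z. h1 z - h2 z) n"
  using assms tendsto_diff unfolding pole_order_le_def right_diff_distrib by blast

lemma pole_order_le_sum_mset:
  "(\<And>x. x \<in># M \<Longrightarrow> pole_order_le (h x) n) \<Longrightarrow> pole_order_le (\<lambda>z. \<Sum>x\<in>#M. h x z) n"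
proof (induction M)
  case empty then show ?case using pole_order_le_const[of 0] by simp
next
  case (add x M)
  have "pole_order_le (h x) n" "pole_order_le (\<lambda>z. \<Sum>x\<in>#M. h x z) n"
    using add by simp_all
  then obtain l1 l2 where "((\<lambda>z. z ^ n * h x z) \<longlongrightarrow> l1) (at_right 0)"
    and "((\<lambda>z. z ^ n * (\<Sum>x\<in>#M. h x z)) \<longlongrightarrow> l2) (at_right 0)"
    unfolding pole_order_le_def by blast
  from tendsto_add[OF this] show ?case
    unfolding pole_order_le_def by (auto simp: distrib_left)
qed

lemma pole_order_le_vanish:
  assumes "pole_order_le h n" "n < m" "(B \<longlongrightarrow> b) (at_right 0)"
  shows "((\<lambda>z. z ^ m * h z * B z) \<longlongrightarrow> 0) (at_right 0)"
proof -
  obtain l where l: "((\<lambda>z. z ^ n * h z) \<longlongrightarrow> l) (at_right 0)"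
    using assms(1) unfolding pole_order_le_def by blast
  have lim: "((\<lambda>z. (z ^ n * h z) * (z ^ (m - n) * B z)) \<longlongrightarrow> l * (0 ^ (m - n) * b)) (at_right 0)"
    by (intro tendsto_intros l assms(3))
  have "z ^ m = z ^ n * z ^ (m - n)" for z :: real
    using assms(2) by (metis le_add_diff_inverse less_imp_le power_add)
  then have "(\<lambda>z. z ^ m * h z * B z) = (\<lambda>z. (z ^ n * h z) * (z ^ (m - n) * B z))"
    by (simp add: mult_ac)
  then show ?thesis using lim assms(2) by (simp add: zero_power)
qed

section \<open>The limit z \<rightarrow> 0+ in the generic model\<close>

text \<open>The analytic input of the generic model: x F(x) = \<Sum>_n a_n x^n near 0, i.e. F has
  (at most) a simple pole at 0 with Laurent coefficients a_n = c_{n-1}.\<close>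
locale generic_model =
  fixes F :: "real \<Rightarrow> real" and a :: "nat \<Rightarrow> real" and r :: real
  assumes r_pos: "r > 0"
    and xF_series: "\<And>x. 0 < x \<Longrightarrow> x < r \<Longrightarrow> (\<lambda>n. a n * x ^ n) sums (x * F x)"
begin

lemma xF_remainder:
  "\<exists>R \<rho>. \<rho> > 0 \<and> isCont R 0 \<and>
     (\<forall>x. 0 < x \<longrightarrow> x < \<rho> \<longrightarrow> x * F x = (\<Sum>n\<le>K. a n * x ^ n) + x ^ Suc K * R x)"
proof -
  have "summable (\<lambda>n. a n * (r / 2) ^ n)"
    using xF_series[of "r / 2"] r_pos sums_summable by force
  then obtain R where R: "isCont R 0"
    and expansion: "\<forall>x. \<bar>x\<bar> < \<bar>r / 2\<bar> \<longrightarrow> (\<lambda>n. a n * x ^ n) sums ((\<Sum>n\<le>K. a n * x ^ n) + x ^ Suc K * R x)"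
    using powser_remainder[of a "r / 2" K] r_pos by auto
  have "x * F x = (\<Sum>n\<le>K. a n * x ^ n) + x ^ Suc K * R x" if "0 < x" "x < r / 2" for x
    using sums_unique2[OF xF_series expansion[rule_format]] that by auto
  then show ?thesis using R r_pos by (intro exI[of _ R] exI[of _ "r / 2"]) auto
qed

lemma F_pole:
  assumes k: "k > 0"
  shows "pole_order_le (\<lambda>z. F (z * k)) 1"
proof -
  obtain R \<rho> where R: "\<rho> > 0" "isCont R 0" and expansion: "\<And>x. 0 < x \<Longrightarrow> x < \<rho> \<Longrightarrow> x * F x = a 0 + x * R x"
    using xF_remainder[of 0] by auto
  have ev: "\<forall>\<^sub>F z in at_right 0. (a 0 + (z * k) * R (z * k)) / k = z ^ 1 * F (z * k)"
    unfolding eventually_at_right_field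
  proof (intro exI conjI allI impI)
    show "\<rho> / k > 0" using R(1) k by simp
    fix z :: real assume "0 < z" "z < \<rho> / k"
    then have "(z * k) * F (z * k) = a 0 + (z * k) * R (z * k)"
      using k by (intro expansion) (auto simp: field_simps)
    then show "(a 0 + (z * k) * R (z * k)) / k = z ^ 1 * F (z * k)"
      using k by (simp add: field_simps)
  qed
  have scale: "((\<lambda>z. z * k) \<longlongrightarrow> 0) (at_right 0)"
    using tendsto_mult[OF tendsto_ident_at[of 0 "{0<..}"] tendsto_const[of k]] by simp
  have "((\<lambda>z. (a 0 + (z * k) * R (z * k)) / k) \<longlongrightarrow> (a 0 + 0 * R 0) / k) (at_right 0)"
    using k by (intro tendsto_divide tendsto_add tendsto_const tendsto_mult scale
        isCont_tendsto_compose[OF R(2) scale]) auto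
  from Lim_transform_eventually[OF this ev] show ?thesis
    unfolding pole_order_le_def by blast
qed

lemma Phi_pole: "pole_order_le (\<lambda>z. Phi F z g) (fnodes g)"
proof (induction g rule: forest_induct)
  case empty then show ?case using pole_order_le_const[of 1] by simp
next
  case (add g1 g2)
  then show ?case using pole_order_le_mult by (simp add: Phi_add)
next
  case (Bplus g)
  then show ?case
    using pole_order_le_mult[OF F_pole[of "real (Suc (fnodes g))"]] by (simp add: Phi_Bplus)
qed

lemma Psi_pole: "pole_order_le (\<lambda>z. Psi F z g) (fnodes g)"
proof (induction "fnodes g" arbitrary: g rule: less_induct)
  case less
  have "pole_order_le (\<lambda>z. if snd p = {#} then 0 else Psi F z (fst p) * Phi F z (snd p)) (fnodes g)"
    if p: "p \<in># cop g" for p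
  proof (cases "snd p = {#}")
    case False
    then have "pole_order_le (\<lambda>z. Psi F z (fst p) * Phi F z (snd p)) (fnodes (fst p) + fnodes (snd p))"
      using less cop_snd_nonempty[OF p] by (intro pole_order_le_mult Phi_pole) auto
    then show ?thesis using False cop_nodes[OF p] by simp
  qed (simp add: pole_order_le_const)
  then show ?case
    by (subst Psi_rec) (intro pole_order_le_diff pole_order_le_const pole_order_le_sum_mset)
qed

lemma Psi_Phi_pole:
  "p \<in># cop g \<Longrightarrow> pole_order_le (\<lambda>z. Psi F z (fst p) * Phi F z (snd p)) (fnodes g)"
  using pole_order_le_mult[OF Psi_pole Phi_pole] cop_nodes by metis

text \<open>The functional \<tau>(w) = lim_{z\<rightarrow>0} z M_1(w), which will turn out to be \<sigma>.\<close>
definition tau :: "forest \<Rightarrow> real" where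
  "tau g = Lim (at_right 0) (\<lambda>z. z * moment F 1 z g)"

lemma tau_lim:
  "\<exists>l. ((\<lambda>z. z * moment F 1 z g) \<longlongrightarrow> l) (at_right 0) \<Longrightarrow> ((\<lambda>z. z * moment F 1 z g) \<longlongrightarrow> tau g) (at_right 0)"
  unfolding tau_def using tendsto_Lim[OF trivial_limit_at_right_real] by metis

lemma tau_empty: "tau {#} = 0"
proof -
  have lim: "((\<lambda>z. z * moment F 1 z {#}) \<longlongrightarrow> 0) (at_right 0)"
    by (simp add: moment_alt cop_empty tone_def)
  then have "((\<lambda>z. z * moment F 1 z {#}) \<longlongrightarrow> tau {#}) (at_right 0)"
    by (intro tau_lim) blast
  from tendsto_unique[OF trivial_limit_at_right_real this lim] show ?thesis .
qed

text \<open>Given convergence of z M_1 on all forests with at most n nodes, the rescaled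
  moments z^m M_m converge to the convolution powers of \<tau> there (by M_{m+1} = M_1 \<star> M_m + Y M_m).\<close>
lemma convpow_lim:
  assumes H: "\<And>b. fnodes b \<le> n \<Longrightarrow> ((\<lambda>z. z * moment F 1 z b) \<longlongrightarrow> tau b) (at_right 0)"
    and g: "fnodes g \<le> n"
  shows "((\<lambda>z. z ^ m * moment F m z g) \<longlongrightarrow> convpow tau m g) (at_right 0)"
  using g
proof (induction m arbitrary: g)
  case 0
  then show ?case by (simp add: moment_0)
next
  case (Suc m)
  have split: "z ^ Suc m * moment F (Suc m) z g
      = (\<Sum>p\<in>#cop g. (z * moment F 1 z (fst p)) * (z ^ m * moment F m z (snd p)))
        + z * (real (fnodes g) * (z ^ m * moment F m z g))" for z :: real
  proof -
    have "z ^ Suc m * conv (moment F 1 z) (moment F m z) g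
        = (\<Sum>p\<in>#cop g. (z * moment F 1 z (fst p)) * (z ^ m * moment F m z (snd p)))"
      unfolding conv_alt sum_mset_distrib_left by (rule sum_mset_cong) (simp only: power_Suc mult_ac)
    then show ?thesis by (simp only: moment_Suc distrib_left power_Suc mult_ac)
  qed
  have "((\<lambda>z. \<Sum>p\<in>#cop g. (z * moment F 1 z (fst p)) * (z ^ m * moment F m z (snd p)))
      \<longlongrightarrow> (\<Sum>p\<in>#cop g. tau (fst p) * convpow tau m (snd p))) (at_right 0)"
  proof (rule tendsto_sum_mset)
    fix p assume p: "p \<in># cop g"
    then have "fnodes (fst p) \<le> n" "fnodes (snd p) \<le> n"
      using cop_nodes[OF p] Suc.prems by auto
    then show "((\<lambda>z. (z * moment F 1 z (fst p)) * (z ^ m * moment F m z (snd p)))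
        \<longlongrightarrow> tau (fst p) * convpow tau m (snd p)) (at_right 0)"
      by (intro tendsto_mult H Suc.IH)
  qed
  moreover have "((\<lambda>z. z * (real (fnodes g) * (z ^ m * moment F m z g)))
      \<longlongrightarrow> 0 * (real (fnodes g) * convpow tau m g)) (at_right 0)"
    by (intro tendsto_intros Suc.IH Suc.prems)
  ultimately show ?case
    unfolding split by (auto simp: conv_alt intro: tendsto_add[THEN tendsto_eq_rhs])
qed

lemma scaled_moment:
  "z ^ j * moment F j z g = (\<Sum>p\<in>#cop g. Psi F z (fst p) * Phi F z (snd p) * (z * real (fnodes (snd p))) ^ j)"
  by (simp add: moment_alt sum_mset_distrib_left power_mult_distrib mult_ac)

text \<open>The same limit for the moments taken at shifted arguments z (|w''| + d): the shift only
  contributes higher powers of z.\<close>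
lemma shifted_moment_lim:
  assumes H: "\<And>b. fnodes b \<le> fnodes g \<Longrightarrow> ((\<lambda>z. z * moment F 1 z b) \<longlongrightarrow> tau b) (at_right 0)"
  shows "((\<lambda>z. \<Sum>p\<in>#cop g. Psi F z (fst p) * Phi F z (snd p) * (z * (real (fnodes (snd p)) + d)) ^ n)
           \<longlongrightarrow> convpow tau n g) (at_right 0)"
proof -
  have binomial: "(z * (real k + d)) ^ n = (\<Sum>j\<le>n. real (n choose j) * (z * d) ^ (n - j) * (z * real k) ^ j)"
    for z :: real and k
    using binomial_ring[of "z * real k" "z * d" n] by (simp add: distrib_left mult_ac)
  have expand: "(\<Sum>p\<in>#cop g. Psi F z (fst p) * Phi F z (snd p) * (z * (real (fnodes (snd p)) + d)) ^ n)
      = (\<Sum>j\<le>n. real (n choose j) * (z * d) ^ (n - j) * (z ^ j * moment F j z g))" for z :: real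
  proof -
    let ?X = "\<lambda>p. Psi F z (fst p) * Phi F z (snd p)"
    have "(\<Sum>p\<in>#cop g. ?X p * (z * (real (fnodes (snd p)) + d)) ^ n)
        = (\<Sum>p\<in>#cop g. \<Sum>j\<le>n. real (n choose j) * (z * d) ^ (n - j) * (?X p * (z * real (fnodes (snd p))) ^ j))"
      by (rule sum_mset_cong) (simp add: binomial sum_distrib_left mult_ac)
    also have "\<dots> = (\<Sum>j\<le>n. real (n choose j) * (z * d) ^ (n - j) * (\<Sum>p\<in>#cop g. ?X p * (z * real (fnodes (snd p))) ^ j))"
      by (simp add: sum_mset_sum_swap sum_mset_distrib_left)
    finally show ?thesis by (simp only: scaled_moment)
  qed
  have "((\<lambda>z. \<Sum>j\<le>n. real (n choose j) * (z * d) ^ (n - j) * (z ^ j * moment F j z g))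
      \<longlongrightarrow> (\<Sum>j\<le>n. real (n choose j) * (0 * d) ^ (n - j) * convpow tau j g)) (at_right 0)"
    by (intro tendsto_intros convpow_lim[OF H]) auto
  moreover have "(\<Sum>j\<le>n. real (n choose j) * (0 * d) ^ (n - j) * convpow tau j g)
      = (\<Sum>j\<le>n. if j = n then convpow tau n g else 0)"
    by (rule sum.cong) auto
  ultimately show ?thesis unfolding expand by simp
qed

text \<open>Remainder terms of order z^m with m > |g| vanish in the limit, since \<Psi>_z \<star> \<Phi>_z
  only has a pole of order |g|.\<close>
lemma cop_remainder_vanish:
  assumes "fnodes g < m" and "\<And>p. ((\<lambda>z. B z p) \<longlongrightarrow> b p) (at_right 0)"
  shows "((\<lambda>z. \<Sum>p\<in>#cop g. z ^ m * (Psi F z (fst p) * Phi F z (snd p)) * B z p) \<longlongrightarrow> 0) (at_right 0)"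
proof -
  have "((\<lambda>z. \<Sum>p\<in>#cop g. z ^ m * (Psi F z (fst p) * Phi F z (snd p)) * B z p) \<longlongrightarrow> (\<Sum>p\<in>#cop g. 0))
      (at_right 0)"
    using assms by (intro tendsto_sum_mset pole_order_le_vanish[OF Psi_Phi_pole])
  then show ?thesis by simp
qed

text \<open>For a function G with a Taylor expansion of order K around 0 and K at
  least the number of nodes of g, the \<Psi>_z \<star> \<Phi>_z-weighted sum of G at the points
  c z (|w''| + d) converges to the sum of the Taylor coefficients against c^n \<tau>^{\<star>n}(g):
  the polynomial part is handled by shifted_moment_lim, and the remainder is of order
  z^{K+1}, beating the pole of order |g| of \<Psi>_z \<star> \<Phi>_z.\<close>
lemma cop_series_lim:
  fixes G R :: "real \<Rightarrow> real" and b :: "nat \<Rightarrow> real" and c d :: real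
  assumes H: "\<And>h. fnodes h \<le> fnodes g \<Longrightarrow> ((\<lambda>z. z * moment F 1 z h) \<longlongrightarrow> tau h) (at_right 0)"
    and K: "fnodes g \<le> K" and R: "isCont R 0"
    and expand: "\<forall>\<^sub>F z in at_right 0. \<forall>k\<le>K. G (c * (z * (real k + d))) =
        (\<Sum>n\<le>K. b n * (c * (z * (real k + d))) ^ n)
        + (c * (z * (real k + d))) ^ Suc K * R (c * (z * (real k + d)))"
  shows "((\<lambda>z. \<Sum>p\<in>#cop g. Psi F z (fst p) * Phi F z (snd p) * G (c * (z * (real (fnodes (snd p)) + d))))
          \<longlongrightarrow> (\<Sum>n\<le>K. b n * c ^ n * convpow tau n g)) (at_right 0)"
proof -
  let ?X = "\<lambda>z p. Psi F z (fst p) * Phi F z (snd p)"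
  let ?y = "\<lambda>z p. z * (real (fnodes (snd p)) + d)"
  let ?B = "\<lambda>z p. (c * (real (fnodes (snd p)) + d)) ^ Suc K * R (c * ?y z p)"
  have split: "(\<Sum>p\<in>#cop g. ?X z p * G (c * ?y z p))
      = (\<Sum>n\<le>K. b n * c ^ n * (\<Sum>p\<in>#cop g. ?X z p * ?y z p ^ n)) + (\<Sum>p\<in>#cop g. z ^ Suc K * ?X z p * ?B z p)"
    if expand_z: "\<forall>k\<le>K. G (c * (z * (real k + d))) = (\<Sum>n\<le>K. b n * (c * (z * (real k + d))) ^ n)
        + (c * (z * (real k + d))) ^ Suc K * R (c * (z * (real k + d)))" for z
  proof -
    have "?X z p * G (c * ?y z p) = (\<Sum>n\<le>K. b n * c ^ n * (?X z p * ?y z p ^ n)) + z ^ Suc K * ?X z p * ?B z p"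
      if p: "p \<in># cop g" for p
    proof -
      have "fnodes (snd p) \<le> K" using cop_nodes[OF p] K by linarith
      then have G_eq: "G (c * ?y z p) = (\<Sum>n\<le>K. b n * (c * ?y z p) ^ n) + (c * ?y z p) ^ Suc K * R (c * ?y z p)"
        using expand_z by blast
      have pw: "(c * ?y z p) ^ n = c ^ n * ?y z p ^ n" for n
        by (rule power_mult_distrib)
      have rem: "(c * ?y z p) ^ Suc K = z ^ Suc K * (c * (real (fnodes (snd p)) + d)) ^ Suc K"
        by (simp only: power_mult_distrib mult_ac)
      show ?thesis
        unfolding G_eq rem unfolding pw by (simp add: sum_distrib_left distrib_left mult_ac)
    qed
    then show ?thesis
      by (simp add: sum_mset.distrib sum_mset_sum_swap sum_mset_distrib_left cong: sum_mset_cong)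
  qed
  have "((\<lambda>z. \<Sum>n\<le>K. b n * c ^ n * (\<Sum>p\<in>#cop g. ?X z p * ?y z p ^ n))
      \<longlongrightarrow> (\<Sum>n\<le>K. b n * c ^ n * convpow tau n g)) (at_right 0)"
    by (intro tendsto_sum tendsto_mult tendsto_const shifted_moment_lim H)
  moreover have "((\<lambda>z. \<Sum>p\<in>#cop g. z ^ Suc K * ?X z p * ?B z p) \<longlongrightarrow> 0) (at_right 0)"
  proof (rule cop_remainder_vanish)
    fix p :: "forest \<times> forest"
    have "((\<lambda>z. c * ?y z p) \<longlongrightarrow> c * (0 * (real (fnodes (snd p)) + d))) (at_right 0)"
      by (intro tendsto_intros)
    then have scale: "((\<lambda>z. c * ?y z p) \<longlongrightarrow> 0) (at_right 0)"
      by simp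
    show "((\<lambda>z. ?B z p) \<longlongrightarrow> (c * (real (fnodes (snd p)) + d)) ^ Suc K * R 0) (at_right 0)"
      by (intro tendsto_mult tendsto_const isCont_tendsto_compose[OF R scale])
  qed (use K in simp)
  ultimately have "((\<lambda>z. (\<Sum>n\<le>K. b n * c ^ n * (\<Sum>p\<in>#cop g. ?X z p * ?y z p ^ n))
      + (\<Sum>p\<in>#cop g. z ^ Suc K * ?X z p * ?B z p)) \<longlongrightarrow> (\<Sum>n\<le>K. b n * c ^ n * convpow tau n g)) (at_right 0)"
    using tendsto_add by fastforce
  then show ?thesis
    using expand by (elim Lim_transform_eventually) (auto elim: eventually_mono simp: split)
qed

text \<open>Applied to G(x) = x F(x) at the points z(|w''| + 1) this computes the limit on a tree:
  \<tau>(B_+(g)) = \<Sum>_n a_n \<tau>^{\<star>n}(g).\<close>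
lemma tree_lim:
  assumes H: "\<And>h. fnodes h \<le> fnodes g \<Longrightarrow> ((\<lambda>z. z * moment F 1 z h) \<longlongrightarrow> tau h) (at_right 0)"
  shows "((\<lambda>z. z * moment F 1 z (Bplus_forest g)) \<longlongrightarrow> (\<Sum>n\<le>fnodes g. a n * convpow tau n g)) (at_right 0)"
proof -
  let ?N = "fnodes g"
  obtain R \<rho> where \<rho>: "\<rho> > 0" and R: "isCont R 0"
    and expansion: "\<And>x. 0 < x \<Longrightarrow> x < \<rho> \<Longrightarrow> x * F x = (\<Sum>n\<le>?N. a n * x ^ n) + x ^ Suc ?N * R x"
    using xF_remainder[of ?N] by blast
  have "\<forall>\<^sub>F z in at_right 0. \<forall>k\<le>?N. 1 * (z * (real k + 1)) * F (1 * (z * (real k + 1)))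
      = (\<Sum>n\<le>?N. a n * (1 * (z * (real k + 1))) ^ n)
        + (1 * (z * (real k + 1))) ^ Suc ?N * R (1 * (z * (real k + 1)))"
    unfolding eventually_at_right_field
  proof (intro exI conjI allI impI)
    show "\<rho> / real (Suc ?N) > 0" using \<rho> by simp
    fix z :: real and k assume z: "0 < z" "z < \<rho> / real (Suc ?N)" and k: "k \<le> ?N"
    have "z * (real k + 1) \<le> z * real (Suc ?N)"
      using z k by (intro mult_left_mono) auto
    also have "\<dots> < \<rho>" using z by (simp add: field_simps)
    finally show "1 * (z * (real k + 1)) * F (1 * (z * (real k + 1)))
      = (\<Sum>n\<le>?N. a n * (1 * (z * (real k + 1))) ^ n)
        + (1 * (z * (real k + 1))) ^ Suc ?N * R (1 * (z * (real k + 1)))"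
      using expansion[of "z * (real k + 1)"] z by simp
  qed
  from cop_series_lim[where G = "\<lambda>x. x * F x" and c = 1 and d = 1 and b = a, OF H order.refl R this]
  show ?thesis unfolding moment_1_Bplus by simp
qed

text \<open>Hence z M_1(g) converges for every forest, by induction on the number of nodes: M_1
  vanishes on 1 and on products of non-trivial forests, and trees are handled by tree_lim.\<close>
lemma moment_1_lim: "((\<lambda>z. z * moment F 1 z g) \<longlongrightarrow> tau g) (at_right 0)"
proof (induction "fnodes g" arbitrary: g rule: less_induct)
  case less
  show ?case
  proof (rule tau_lim, cases g rule: forest_cases)
    case 1
    then have "(\<lambda>z. z * moment F 1 z g) = (\<lambda>z. 0)"
      by (simp add: moment_alt cop_empty tone_def)
    then show "\<exists>l. ((\<lambda>z. z * moment F 1 z g) \<longlongrightarrow> l) (at_right 0)" by (metis tendsto_const)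
  next
    case (2 h)
    have "((\<lambda>z. z * moment F 1 z (Bplus_forest h)) \<longlongrightarrow> (\<Sum>n\<le>fnodes h. a n * convpow tau n h)) (at_right 0)"
      using less 2 by (intro tree_lim) auto
    then have "((\<lambda>z. z * moment F 1 z g) \<longlongrightarrow> (\<Sum>n\<le>fnodes h. a n * convpow tau n h)) (at_right 0)"
      using 2 by simp
    then show "\<exists>l. ((\<lambda>z. z * moment F 1 z g) \<longlongrightarrow> l) (at_right 0)" by blast
  next
    case (3 g1 g2)
    then have "(\<lambda>z. z * moment F 1 z g) = (\<lambda>z. 0)"
      unfolding 3(1) moment_1_add by (simp add: counit_def 3)
    then show "\<exists>l. ((\<lambda>z. z * moment F 1 z g) \<longlongrightarrow> l) (at_right 0)" by (metis tendsto_const)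
  qed
qed

lemma tau_Bplus: "tau (Bplus_forest g) = (\<Sum>n\<le>fnodes g. a n * convpow tau n g)"
  using tendsto_unique[OF trivial_limit_at_right_real moment_1_lim tree_lim[OF moment_1_lim]] .

text \<open>\<tau> vanishes on 1, so \<tau>^{\<star>k} vanishes on forests with fewer than k nodes.\<close>
lemma convpow_tau_zero: "fnodes g < k \<Longrightarrow> convpow tau k g = 0"
proof (induction k arbitrary: g)
  case (Suc k)
  have "tau (fst p) * convpow tau k (snd p) = 0" if p: "p \<in># cop g" for p
  proof (cases "fst p = {#}")
    case False
    then show ?thesis using Suc cop_fst_nonempty[OF p] by simp
  qed (simp add: tau_empty)
  then have "conv tau (convpow tau k) g = (\<Sum>p\<in>#cop g. 0)"
    unfolding conv_alt by (rule sum_mset_cong)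
  then show ?case by simp
qed simp

section \<open>The polynomial P and the functional \<sigma>\<close>

definition P_tau :: "forest \<Rightarrow> real poly" where
  "P_tau g = (\<Sum>m\<le>Suc (fnodes g). monom ((-1) ^ m / fact m * convpow tau m g) m)"

lemma poly_P_tau: "poly (P_tau g) x = (\<Sum>m\<le>Suc (fnodes g). inverse (fact m) * (- x) ^ m * convpow tau m g)"
  unfolding P_tau_def poly_sum poly_monom
  by (intro sum.cong refl) (simp add: power_minus[of x] divide_inverse mult_ac)

text \<open>Expanding s^{-z|w''|} \<mu>^{z|w''|} = exp(-z|w''| ln(s/\<mu>)) to order |g| + 1 gives the limit
  of the renormalized Feynman rules as z \<rightarrow> 0.\<close>
lemma phiR_lim:
  assumes mu: "\<mu> > 0" and s: "s > 0"
  shows "((\<lambda>z. phiR F \<mu> s z g) \<longlongrightarrow> poly (P_tau g) (ln s - ln \<mu>)) (at_right 0)"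
proof -
  define L where "L = ln s - ln \<mu>"
  define K where "K = Suc (fnodes g)"
  obtain E where E: "isCont E 0"
    and expansion: "\<And>x::real. \<bar>x\<bar> < 1 \<Longrightarrow> exp x = (\<Sum>m\<le>K. inverse (fact m) * x ^ m) + x ^ Suc K * E x"
    using exp_remainder[of K] by blast
  have "\<forall>\<^sub>F z in at_right 0. \<forall>k\<le>K. exp (- L * (z * (real k + 0)))
      = (\<Sum>n\<le>K. inverse (fact n) * (- L * (z * (real k + 0))) ^ n)
        + (- L * (z * (real k + 0))) ^ Suc K * E (- L * (z * (real k + 0)))"
    unfolding eventually_at_right_field
  proof (intro exI conjI allI impI)
    show "1 / ((\<bar>L\<bar> + 1) * real K) > 0" by (simp add: K_def add_pos_nonneg)
    fix z :: real and k assume z: "0 < z" "z < 1 / ((\<bar>L\<bar> + 1) * real K)" and k: "k \<le> K"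
    have "\<bar>- L * (z * (real k + 0))\<bar> \<le> (\<bar>L\<bar> + 1) * real K * z"
      using z k by (simp add: abs_mult) (intro mult_mono, auto)
    also have "\<dots> < 1" using z by (simp add: field_simps K_def add_pos_nonneg)
    finally show "exp (- L * (z * (real k + 0)))
      = (\<Sum>n\<le>K. inverse (fact n) * (- L * (z * (real k + 0))) ^ n)
        + (- L * (z * (real k + 0))) ^ Suc K * E (- L * (z * (real k + 0)))"
      by (rule expansion)
  qed
  from cop_series_lim[where G = exp and c = "- L" and d = 0 and b = "\<lambda>n. inverse (fact n)",
      OF moment_1_lim _ E this]
  have "((\<lambda>z. \<Sum>p\<in>#cop g. Psi F z (fst p) * Phi F z (snd p) * exp (- z * real (fnodes (snd p)) * L))
      \<longlongrightarrow> poly (P_tau g) L) (at_right 0)"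
    by (simp add: K_def poly_P_tau mult_ac)
  moreover have "((\<lambda>z. exp (- z * real (fnodes g) * ln \<mu>)) \<longlongrightarrow> 1) (at_right 0)"
    by (rule tendsto_eq_intros) (auto intro!: tendsto_eq_intros)
  ultimately show ?thesis
    using tendsto_mult unfolding phiR_formula[OF mu s] L_def by fastforce
qed

lemma Ppoly_eq:
  assumes mu: "\<mu> > 0"
  shows "Ppoly F \<mu> g = P_tau g"
  unfolding Ppoly_def
proof (rule the_equality)
  show "\<forall>s>0. ((\<lambda>z. phiR F \<mu> s z g) \<longlongrightarrow> poly (P_tau g) (ln (s / \<mu>))) (at_right 0)"
    using phiR_lim[OF mu] mu by (simp add: ln_div)
next
  fix p assume P: "\<forall>s>0. ((\<lambda>z. phiR F \<mu> s z g) \<longlongrightarrow> poly p (ln (s / \<mu>))) (at_right 0)"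
  have "poly p x = poly (P_tau g) x" for x
  proof -
    define s where "s = \<mu> * exp x"
    have s: "s > 0" and "ln (s / \<mu>) = x" "ln s - ln \<mu> = x"
      using mu by (simp_all add: s_def ln_mult)
    then show ?thesis
      using tendsto_unique[OF trivial_limit_at_right_real P[rule_format, OF s] phiR_lim[OF mu s]] by simp
  qed
  then have "poly p = poly (P_tau g)" by (rule ext)
  then show "p = P_tau g" by (simp add: poly_eq_poly_eq_iff)
qed

lemma sigma_eq_tau:
  assumes "\<mu> > 0"
  shows "sigma F \<mu> g = tau g"
proof -
  have "coeff (P_tau g) 1 = - convpow tau 1 g"
    unfolding P_tau_def coeff_sum coeff_monom by (simp add: sum.delta)
  then show ?thesis
    unfolding sigma_def Ppoly_eq[OF assms] poly_0_coeff_0 coeff_pderiv by simp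
qed

end

text \<open>The hypotheses of the theorem put the Mellin transform into the generic model:
  multiplying the Laurent series by z gives the power series x F(x) = \<Sum>_n c_{n-1} x^n.\<close>
lemma generic_model_of_laurent:
  fixes c :: "int \<Rightarrow> real"
  assumes "r > 0"
    and laurent: "\<forall>z. 0 < z \<and> z < r \<longrightarrow> ((\<lambda>n. c (int n - 1) * z powi (int n - 1)) sums M z)"
  shows "generic_model M (\<lambda>n. c (int n - 1)) r"
proof
  fix x :: real assume x: "0 < x" "x < r"
  have eq: "x * (c (int n - 1) * x powi (int n - 1)) = c (int n - 1) * x ^ n" for n
  proof -
    have "x powi (int n - 1) = x ^ n / x"
      using x by (simp add: power_int_diff)
    then show ?thesis using x by simp
  qed
  then show "(\<lambda>n. c (int n - 1) * x ^ n) sums (x * M x)"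
    using sums_mult[OF laurent[rule_format, OF conjI[OF x]], of x] by (simp only: eq)
qed (rule assms(1))

lemma linext_Bplus:
  "linext \<alpha> (Bplus w) = (\<Sum>g\<in>Poly_Mapping.keys w. Poly_Mapping.lookup w g * \<alpha> (Bplus_forest g))"
proof -
  let ?K = "Poly_Mapping.keys w"
  have lookup: "Poly_Mapping.lookup (Bplus w) h = (\<Sum>g\<in>?K. Poly_Mapping.lookup w g when Bplus_forest g = h)" for h
    unfolding Bplus_def lookup_sum lookup_single ..
  have lookup_Bplus: "Poly_Mapping.lookup (Bplus w) (Bplus_forest g) = Poly_Mapping.lookup w g" if "g \<in> ?K" for g
    unfolding lookup using that by (simp add: Bplus_forest_inj when_def)
  have keys: "Poly_Mapping.keys (Bplus w) \<subseteq> Bplus_forest ` ?K"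
  proof
    fix h assume h: "h \<in> Poly_Mapping.keys (Bplus w)"
    show "h \<in> Bplus_forest ` ?K"
    proof (rule ccontr)
      assume "h \<notin> Bplus_forest ` ?K"
      then have "Poly_Mapping.lookup (Bplus w) h = 0"
        unfolding lookup by (intro sum.neutral) (auto simp: when_def)
      then show False using h by (simp add: in_keys_iff)
    qed
  qed
  have "linext \<alpha> (Bplus w) = (\<Sum>h\<in>Bplus_forest ` ?K. Poly_Mapping.lookup (Bplus w) h * \<alpha> h)"
    unfolding linext_def by (rule sum.mono_neutral_left) (auto simp: keys in_keys_iff)
  also have "\<dots> = (\<Sum>g\<in>?K. Poly_Mapping.lookup w g * \<alpha> (Bplus_forest g))"
    by (subst sum.reindex) (auto simp: inj_on_def Bplus_forest_inj lookup_Bplus)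
  finally show ?thesis .
qed

lemma linext_Bplus_sums:
  assumes "\<And>g. (\<lambda>n. u n * \<alpha> n g) sums \<beta> (Bplus_forest g)"
  shows "(\<lambda>n. u n * linext (\<alpha> n) w) sums linext \<beta> (Bplus w)"
proof -
  have "(\<lambda>n. \<Sum>g\<in>Poly_Mapping.keys w. Poly_Mapping.lookup w g * (u n * \<alpha> n g))
      sums (\<Sum>g\<in>Poly_Mapping.keys w. Poly_Mapping.lookup w g * \<beta> (Bplus_forest g))"
    by (intro sums_sum sums_mult assms)
  then show ?thesis
    unfolding linext_Bplus by (simp add: linext_def sum_distrib_left mult_ac)
qed

theorem mainTheorem11:
  fixes f :: "real \<Rightarrow> real" and c0 \<epsilon> r \<mu> :: real and c :: "int \<Rightarrow> real" and w :: HR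
  assumes f_cont: "continuous_on {0..} f"
    and eps_pos: "\<epsilon> > 0"
    and f_asymp: "(\<lambda>\<zeta>. f \<zeta> - c0 / \<zeta>) \<in> O[at_top](\<lambda>\<zeta>. \<zeta> powr (- 1 - \<epsilon>))"
    and r_pos: "r > 0"
    and laurent: "\<forall>z. 0 < z \<and> z < r \<longrightarrow>
                    ((\<lambda>n. c (int n - 1) * z powi (int n - 1)) sums mellin f z)"
    and mu_pos: "\<mu> > 0"
  shows "(\<lambda>n. c (int n - 1) * linext (convpow (sigma (mellin f) \<mu>) n) w)
           sums linext (sigma (mellin f) \<mu>) (Bplus w)"
proof -
  interpret generic_model "mellin f" "\<lambda>n. c (int n - 1)" r
    using generic_model_of_laurent[OF r_pos laurent] .
  have sigma: "sigma (mellin f) \<mu> = tau"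
    using sigma_eq_tau[OF mu_pos] by (rule ext)
  have "(\<lambda>n. c (int n - 1) * convpow tau n g) sums tau (Bplus_forest g)" for g
  proof -
    have "(\<lambda>n. c (int n - 1) * convpow tau n g) sums (\<Sum>n\<le>fnodes g. c (int n - 1) * convpow tau n g)"
      by (rule sums_finite) (auto simp: convpow_tau_zero)
    then show ?thesis by (simp add: tau_Bplus)
  qed
  then show ?thesis
    unfolding sigma by (rule linext_Bplus_sums)
qed

end
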